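(* Let $J$ be an indecomposable module in category $\mathcal{J}$, let $\lambda\in\mathbb{C}^n$ be a weight of $J$, and let $U=J_\lambda$. For $j=1,\dots,n$ and $s\in\mathbb{Z}^n$, define $D_j(s)\in\mathrm{End}\,U$ by $D_j(s)u=e_{-s}\,(d_j(s)u)$. Then for all $j,k$ and $s,m\in\mathbb{Z}^n$, $$[D_j(s),D_k(m)]=m_j\big(D_k(s+m)-D_k(m)\big)-s_k\big(D_j(s+m)-D_j(s)\big).$$
   Context: Let $n\ge 1$. Let $\mathcal{F}(\mathbb{T}^n)$ be the commutative algebra with $\mathbb{C}$-basis $e_m=e^{2\pi i m\cdot x}$, $m\in\mathbb{Z}^n$, and $e_me_k=e_{m+k}$. Let $W_n$ be the Lie algebra with $\mathbb{C}$-basis $d_j(s)=\frac{1}{2\pi i}e^{2\pi i s\cdot x}\frac{\partial}{\partial x^j}$, for $j=1,\dots,n$ and $s\in\mathbb{Z}^n$, and bracket $$[d_j(s),d_k(m)]=m_j\,d_k(s+m)-s_k\,d_j(s+m).$$ $W_n$ acts on $\mathcal{F}(\mathbb{T}^n)$ by derivations via $d_j(s)e_m=m_je_{m+s}$. Write $d_j=d_j(0)$. Category $\mathcal{J}$ consists of $W_n$-modules $J$ that are also $\mathcal{F}(\mathbb{T}^n)$-modules and satisfy: (J1) each $d_j$ acts diagonalizably on $J$; (J2) $J$ is a free $\mathcal{F}(\mathbb{T}^n)$-module of finite rank; (J3) $u(fw)=(uf)w+f(uw)$ for all $u\in W_n$, $f\in\mathcal{F}(\mathbb{T}^n)$, $w\in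 J$. For $\mu\in\mathbb{C}^n$, the weight space is $J_\mu=\{w\in J: d_jw=\mu_jw \text{ for all } j\}$. Submodules are subspaces invariant under both $W_n$ and $\mathcal{F}(\mathbb{T}^n)$. Indecomposable modules are nonzero. *)

theory Defs
  imports Complex_Main
begin

text \<open>Multi-indices in Z^n are functions 'n => int for a finite nonempty index type 'n
 (n = CARD('n) >= 1). E m is the action of e_m in F(T^n); d j s is the action of d_j(s).\<close>

definition zidx :: "'n \<Rightarrow> int" where "zidx = (\<lambda>_. 0)"
definition addz :: "('n \<Rightarrow> int) \<Rightarrow> ('n \<Rightarrow> int) \<Rightarrow> ('n \<Rightarrow> int)"
  where "addz s m = (\<lambda>i. s i + m i)"
definition negz :: "('n \<Rightarrow> int) \<Rightarrow> ('n \<Rightarrow> int)" where "negz s = (\<lambda>i. - s i)"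

text \<open>(J2): free F(T^n)-module of finite rank, with basis b 0, ..., b (r-1).
 An element of F is a finite linear combination of the e_m.\<close>
definition free_finite_rank ::
  "(complex \<Rightarrow> 'v::ab_group_add \<Rightarrow> 'v) \<Rightarrow> (('n::finite \<Rightarrow> int) \<Rightarrow> 'v \<Rightarrow> 'v) \<Rightarrow> bool" where
  "free_finite_rank sc E \<longleftrightarrow>
    (\<exists>(r::nat) (b::nat \<Rightarrow> 'v).
      (\<forall>w. \<exists>M c. finite M \<and> w = (\<Sum>i<r. \<Sum>m\<in>M. sc (c i m) (E m (b i)))) \<and>
      (\<forall>M c. finite M \<longrightarrow> (\<Sum>i<r. \<Sum>m\<in>M. sc (c i m) (E m (b i))) = 0
              \<longrightarrow> (\<forall>i<r. \<forall>m\<in>M. c i m = 0)))"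

definition in_cat_J ::
  "(complex \<Rightarrow> 'v::ab_group_add \<Rightarrow> 'v) \<Rightarrow> (('n::finite \<Rightarrow> int) \<Rightarrow> 'v \<Rightarrow> 'v)
    \<Rightarrow> ('n \<Rightarrow> ('n \<Rightarrow> int) \<Rightarrow> 'v \<Rightarrow> 'v) \<Rightarrow> bool" where
  "in_cat_J sc E d \<longleftrightarrow>
    vector_space sc \<and>
    \<comment> \<open>F(T^n)-module structure\<close>
    (\<forall>m. Vector_Spaces.linear sc sc (E m)) \<and>
    (\<forall>w. E zidx w = w) \<and>
    (\<forall>m k w. E m (E k w) = E (addz m k) w) \<and>
    \<comment> \<open>W_n-module structure\<close>
    (\<forall>j s. Vector_Spaces.linear sc sc (d j s)) \<and>
    (\<forall>j k s m w. d j s (d k m w) - d k m (d j s w)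
        = sc (of_int (m j)) (d k (addz s m) w) - sc (of_int (s k)) (d j (addz s m) w)) \<and>
    \<comment> \<open>(J1) each d_j = d_j(0) acts diagonalizably\<close>
    (\<forall>j. module.span sc {w. \<exists>c. d j zidx w = sc c w} = UNIV) \<and>
    \<comment> \<open>(J2)\<close>
    free_finite_rank sc E \<and>
    \<comment> \<open>(J3) u(fw) = (uf)w + f(uw), with d_j(s) e_m = m_j e_(m+s)\<close>
    (\<forall>j s m w. d j s (E m w) = sc (of_int (m j)) (E (addz m s) w) + E m (d j s w))"

definition submodule_J ::
  "(complex \<Rightarrow> 'v::ab_group_add \<Rightarrow> 'v) \<Rightarrow> (('n::finite \<Rightarrow> int) \<Rightarrow> 'v \<Rightarrow> 'v)
    \<Rightarrow> ('n \<Rightarrow> ('n \<Rightarrow> int) \<Rightarrow> 'v \<Rightarrow> 'v) \<Rightarrow> 'v set \<Rightarrow> bool" where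
  "submodule_J sc E d W \<longleftrightarrow>
    module.subspace sc W \<and> (\<forall>m. \<forall>w\<in>W. E m w \<in> W) \<and> (\<forall>j s. \<forall>w\<in>W. d j s w \<in> W)"

definition indecomposable_J ::
  "(complex \<Rightarrow> 'v::ab_group_add \<Rightarrow> 'v) \<Rightarrow> (('n::finite \<Rightarrow> int) \<Rightarrow> 'v \<Rightarrow> 'v)
    \<Rightarrow> ('n \<Rightarrow> ('n \<Rightarrow> int) \<Rightarrow> 'v \<Rightarrow> 'v) \<Rightarrow> bool" where
  "indecomposable_J sc E d \<longleftrightarrow>
    (\<exists>w::'v. w \<noteq> 0) \<and>
    \<not> (\<exists>W1 W2. submodule_J sc E d W1 \<and> submodule_J sc E d W2 \<and>
          W1 \<noteq> {0} \<and> W2 \<noteq> {0} \<and> W1 \<inter> W2 = {0} \<and>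
          (\<forall>w. \<exists>a\<in>W1. \<exists>b\<in>W2. w = a + b))"

definition weight_space ::
  "(complex \<Rightarrow> 'v \<Rightarrow> 'v) \<Rightarrow> ('n \<Rightarrow> ('n \<Rightarrow> int) \<Rightarrow> 'v \<Rightarrow> 'v) \<Rightarrow> ('n \<Rightarrow> complex) \<Rightarrow> 'v set" where
  "weight_space sc d lam = {w. \<forall>j. d j zidx w = sc (lam j) w}"

definition Dop ::
  "(('n \<Rightarrow> int) \<Rightarrow> 'v \<Rightarrow> 'v) \<Rightarrow> ('n \<Rightarrow> ('n \<Rightarrow> int) \<Rightarrow> 'v \<Rightarrow> 'v) \<Rightarrow> 'n \<Rightarrow> ('n \<Rightarrow> int) \<Rightarrow> 'v \<Rightarrow> 'v"
  where "Dop E d j s u = E (negz s) (d j s u)"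

end

theory Submission
  imports Defs
begin

text \<open>The Leibniz rule (J3) moves d_j(s) past e_{-m} at the cost of the term -m_j e_{s-m};
  this gives D_j(s) D_k(m) = e_{-(s+m)} d_j(s) d_k(m) - m_j D_k(m). Antisymmetrising, the leading
  terms become e_{-(s+m)} applied to the W_n-bracket, i.e. m_j D_k(s+m) - s_k D_j(s+m).
  Since d_j(s) and e_s both shift weights by s, D_j(s) preserves every weight space.\<close>

lemma zidx_apply [simp]: "zidx i = 0"
  by (simp add: zidx_def)

lemma addz_zidx_left [simp]: "addz zidx s = s"
  by (simp add: addz_def zidx_def)

lemma addz_zidx_right [simp]: "addz s zidx = s"
  by (simp add: addz_def zidx_def)

locale AV_module = vector_space sc
  for sc :: "complex \<Rightarrow> 'v::ab_group_add \<Rightarrow> 'v" +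
  fixes E :: "('n \<Rightarrow> int) \<Rightarrow> 'v \<Rightarrow> 'v"
    and d :: "'n \<Rightarrow> ('n \<Rightarrow> int) \<Rightarrow> 'v \<Rightarrow> 'v"
  assumes linear_E: "Vector_Spaces.linear sc sc (E m)"
    and E_E: "E p (E q w) = E (addz p q) w"
    and linear_d: "Vector_Spaces.linear sc sc (d j s)"
    and d_bracket: "d j s (d k m w) - d k m (d j s w)
        = sc (of_int (m j)) (d k (addz s m) w) - sc (of_int (s k)) (d j (addz s m) w)"
    and d_E: "d j s (E m w) = sc (of_int (m j)) (E (addz m s) w) + E m (d j s w)"
begin

lemmas E_add = module_hom.add[OF linear_E[unfolded linear_iff_module_hom]]
lemmas E_diff = module_hom.diff[OF linear_E[unfolded linear_iff_module_hom]]
lemmas E_scale = module_hom.scale[OF linear_E[unfolded linear_iff_module_hom]]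
lemmas d_scale = module_hom.scale[OF linear_d[unfolded linear_iff_module_hom]]

lemma d_mem_weight_space:
  assumes "u \<in> weight_space sc d lam"
  shows "d j s u \<in> weight_space sc d (\<lambda>i. lam i + of_int (s i))"
  unfolding weight_space_def
proof (intro CollectI allI)
  fix i
  have "d i zidx (d j s u) = d j s (d i zidx u) + sc (of_int (s i)) (d j s u)"
    using d_bracket[of i zidx j s u] by (simp add: algebra_simps)
  also have "\<dots> = sc (lam i + of_int (s i)) (d j s u)"
    using assms by (simp add: weight_space_def d_scale scale_left_distrib)
  finally show "d i zidx (d j s u) = sc (lam i + of_int (s i)) (d j s u)" .
qed

lemma E_mem_weight_space:
  assumes "u \<in> weight_space sc d lam"
  shows "E m u \<in> weight_space sc d (\<lambda>i. lam i + of_int (m i))"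
  using assms by (simp add: weight_space_def d_E E_scale scale_left_distrib add.commute)

lemma Dop_mem_weight_space:
  assumes "u \<in> weight_space sc d lam"
  shows "Dop E d j s u \<in> weight_space sc d lam"
  using E_mem_weight_space[OF d_mem_weight_space[OF assms, where j = j and s = s], where m = "negz s"]
  by (simp add: Dop_def negz_def)

lemma Dop_Dop:
  "Dop E d j s (Dop E d k m u)
     = E (negz (addz s m)) (d j s (d k m u)) - sc (of_int (m j)) (Dop E d k m u)"
proof -
  have "Dop E d j s (Dop E d k m u) = E (negz s) (d j s (E (negz m) (d k m u)))"
    by (simp add: Dop_def)
  also have "\<dots> = E (negz s) (sc (of_int (- m j)) (E (addz (negz m) s) (d k m u))
                                + E (negz m) (d j s (d k m u)))"
    by (simp add: d_E negz_def)
  also have "\<dots> = sc (of_int (- m j)) (E (negz m) (d k m u)) + E (negz (addz s m)) (d j s (d k m u))"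
    by (simp add: E_add E_diff E_scale E_E addz_def negz_def)
  also have "\<dots> = E (negz (addz s m)) (d j s (d k m u)) - sc (of_int (m j)) (Dop E d k m u)"
    by (simp add: Dop_def scale_minus_left)
  finally show ?thesis .
qed

lemma Dop_commutator:
  "Dop E d j s (Dop E d k m u) - Dop E d k m (Dop E d j s u)
     = sc (of_int (m j)) (Dop E d k (addz s m) u - Dop E d k m u)
       - sc (of_int (s k)) (Dop E d j (addz s m) u - Dop E d j s u)"
proof -
  have "addz m s = addz s m"
    by (simp add: addz_def add.commute)
  then have "Dop E d j s (Dop E d k m u) - Dop E d k m (Dop E d j s u)
      = E (negz (addz s m)) (d j s (d k m u) - d k m (d j s u))
        - sc (of_int (m j)) (Dop E d k m u) + sc (of_int (s k)) (Dop E d j s u)"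
    by (simp add: Dop_Dop E_diff algebra_simps)
  also have "\<dots> = sc (of_int (m j)) (Dop E d k (addz s m) u) - sc (of_int (s k)) (Dop E d j (addz s m) u)
      - sc (of_int (m j)) (Dop E d k m u) + sc (of_int (s k)) (Dop E d j s u)"
    by (simp add: d_bracket E_diff E_scale Dop_def)
  finally show ?thesis
    by (simp add: scale_right_diff_distrib algebra_simps)
qed

end

lemma in_cat_J_AV_module: "in_cat_J sc E d \<Longrightarrow> AV_module sc E d"
  unfolding in_cat_J_def AV_module_def AV_module_axioms_def by blast

theorem lemma1:
  fixes sc :: "complex \<Rightarrow> 'v::ab_group_add \<Rightarrow> 'v"
    and E :: "('n::finite \<Rightarrow> int) \<Rightarrow> 'v \<Rightarrow> 'v"
    and d :: "'n \<Rightarrow> ('n \<Rightarrow> int) \<Rightarrow> 'v \<Rightarrow> 'v"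
    and lam :: "'n \<Rightarrow> complex"
  assumes "in_cat_J sc E d"
    and "indecomposable_J sc E d"
    and "weight_space sc d lam \<noteq> {0}"
  shows "\<forall>j k s m. \<forall>u \<in> weight_space sc d lam.
           Dop E d j s u \<in> weight_space sc d lam \<and>
           Dop E d j s (Dop E d k m u) - Dop E d k m (Dop E d j s u)
             = sc (of_int (m j)) (Dop E d k (addz s m) u - Dop E d k m u)
               - sc (of_int (s k)) (Dop E d j (addz s m) u - Dop E d j s u)"
proof -
  interpret AV_module sc E d
    using assms(1) by (rule in_cat_J_AV_module)
  show ?thesis
    by (simp add: Dop_mem_weight_space Dop_commutator)
qed

end
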